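(* Let $\Sigma$ be a finite non-empty alphabet, $V=\mathbb{R}^d$ with a fixed norm $|\cdot|_V$, $W=\mathbb{R}^N$ with a fixed norm $|\cdot|_W$, $\lambda>0$, and $\mathbf{h},\mathbf{g}\colon\Sigma^*\to V$. Then: (1) There exists a constant $c(\lambda)>0$ such that for every $\psi\in\mathrm{Aff}(V,W)$, $$d_{\infty,\Delta}(\mathrm{softmax}_\lambda\circ\psi\circ\mathbf{h},\ \mathcal{V}_N(\mathbf{g}))\le c(\lambda)\,\|\psi_{\mathrm{lin}}\|\ \inf_{\phi\in\mathrm{Aff}(V)}\|\mathbf{h}-\phi\circ\mathbf{g}\|_\infty.$$ (2) $d_{\mathcal{V}(V,\Delta)}(\mathbf{h},\mathbf{g})\le c(\lambda)\, d_{\mathrm{Aff}(V,W)}(\mathbf{h},\mathbf{g})$. (3) If $\inf_{\phi\in\mathrm{Aff}(V)}\|\mathbf{h}-\phi\circ\mathbf{g}\|_\infty=0$ then $d_{\mathrm{Aff}(V,W)}(\mathbf{h},\mathbf{g})=0$, and if $d_{\mathrm{Aff}(V,W)}(\mathbf{h},\mathbf{g})=0$ then $d_{\mathcal{V}(V,\Delta)}(\mathbf{h},\mathbf{g})=0$.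
   Context: $\mathrm{Aff}(V)$ is the group of invertible affine maps of $V$; $\mathrm{Aff}(V,W)$ is the set of affine maps $\psi(\mathbf{v})=\psi_{\mathrm{lin}}\mathbf{v}+\mathbf{b}$ with $\psi_{\mathrm{lin}}\colon V\to W$ linear and $\mathbf{b}\in W$; $\|\psi_{\mathrm{lin}}\|$ is its operator norm with respect to $|\cdot|_V,|\cdot|_W$. For maps into $V$, $\|\mathbf{f}\|_\infty=\sup_{\mathbf{y}\in\Sigma^*}|\mathbf{f}(\mathbf{y})|_V$; $d_{\infty,W}(\mathbf{f},\mathbf{f}')=\sup_{\mathbf{y}}|\mathbf{f}(\mathbf{y})-\mathbf{f}'(\mathbf{y})|_W$ for maps into $W$; $d_{\infty,\Delta}(p,q)=\sup_{\mathbf{y}}|p(\mathbf{y})-q(\mathbf{y})|_W$ for maps $p,q\colon\Sigma^*\to\Delta^{N-1}$ (the probability simplex in $\mathbb{R}^N$); all these take values in $[0,\infty]$. For a distance $d$, $d(x,E)=\inf_{y\in E}d(x,y)$ and $d^{\mathcal{H}}(E,E')=\sup_{x\in E}d(x,E')$. $\mathrm{softmax}_\lambda(\mathbf{x})_i=e^{\lambda x_i}/\sum_je^{\lambda x_j}$. Set $\mathrm{Aff}_{V,W}(\mathbf{h})=\{\psi\circ\mathbf{h}:\psi\in\mathrm{Aff}(V,W)\}$, $\mathcal{V}_N(\mathbf{h})=\{\mathrm{softmax}_\lambda\circ\psi\circ\mathbf{h}:\psi\in\mathrm{Aff}(V,W)\}$, $d_{\mathrm{Aff}(V,W)}(\mathbf{h},\mathbf{g})=d^{\mathcal{H}}_{\infty,W}(\mathrm{Aff}_{V,W}(\mathbf{h}),\mathrm{Aff}_{V,W}(\mathbf{g}))$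 and $d_{\mathcal{V}(V,\Delta)}(\mathbf{h},\mathbf{g})=d^{\mathcal{H}}_{\infty,\Delta}(\mathcal{V}_N(\mathbf{h}),\mathcal{V}_N(\mathbf{g}))$. *)

theory Defs
  imports "HOL-Analysis.Analysis"
begin

text \<open>A norm on a real vector space, given as a function (the paper fixes
  arbitrary norms on V = R^d and W = R^N).\<close>
definition is_norm :: "('v::real_vector \<Rightarrow> real) \<Rightarrow> bool" where
  "is_norm n \<longleftrightarrow> (\<forall>x. 0 \<le> n x) \<and> (\<forall>x. n x = 0 \<longleftrightarrow> x = 0)
     \<and> (\<forall>a x. n (a *\<^sub>R x) = \<bar>a\<bar> * n x) \<and> (\<forall>x y. n (x + y) \<le> n x + n y)"

definition op_norm :: "('v \<Rightarrow> real) \<Rightarrow> ('w \<Rightarrow> real) \<Rightarrow> ('v \<Rightarrow> 'w) \<Rightarrow> real" where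
  "op_norm nV nW L = Sup {nW (L v) | v. nV v \<le> 1}"

definition softmax :: "real \<Rightarrow> real^'n \<Rightarrow> real^'n" where
  "softmax lam x = (\<chi> i. exp (lam * x $ i) / (\<Sum>j\<in>UNIV. exp (lam * x $ j)))"

definition d_inf :: "('w::real_vector \<Rightarrow> real) \<Rightarrow> ('s \<Rightarrow> 'w) \<Rightarrow> ('s \<Rightarrow> 'w) \<Rightarrow> ereal" where
  "d_inf nW f f' = (SUP y. ereal (nW (f y - f' y)))"

definition sup_norm :: "('v \<Rightarrow> real) \<Rightarrow> ('s \<Rightarrow> 'v) \<Rightarrow> ereal" where
  "sup_norm nV f = (SUP y. ereal (nV (f y)))"

definition set_dist :: "('x \<Rightarrow> 'x \<Rightarrow> ereal) \<Rightarrow> 'x \<Rightarrow> 'x set \<Rightarrow> ereal" where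
  "set_dist d x E = (INF y\<in>E. d x y)"

definition hausdorff :: "('x \<Rightarrow> 'x \<Rightarrow> ereal) \<Rightarrow> 'x set \<Rightarrow> 'x set \<Rightarrow> ereal" where
  "hausdorff d E E' = (SUP x\<in>E. set_dist d x E')"

text \<open>Aff(V,W): affine maps v \<mapsto> L v + b with L linear, represented by (L, b).
  Aff(V): invertible affine maps of V.\<close>
definition Aff :: "(('v::real_vector \<Rightarrow> 'w::real_vector) \<times> 'w) set" where
  "Aff = {(L, b). linear L}"

definition Aff_inv :: "(('v::real_vector \<Rightarrow> 'v) \<times> 'v) set" where
  "Aff_inv = {(A, b). linear A \<and> bij A}"

definition aff_app :: "('v \<Rightarrow> 'w) \<times> 'w \<Rightarrow> 'v \<Rightarrow> 'w::plus" where
  "aff_app \<psi> v = fst \<psi> v + snd \<psi>"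

definition Aff_of :: "('s \<Rightarrow> 'v::real_vector) \<Rightarrow> ('s \<Rightarrow> 'w::real_vector) set" where
  "Aff_of h = {aff_app \<psi> \<circ> h | \<psi>. \<psi> \<in> Aff}"

definition V_of :: "real \<Rightarrow> ('s \<Rightarrow> 'v::real_vector) \<Rightarrow> ('s \<Rightarrow> real^'n) set" where
  "V_of lam h = {softmax lam \<circ> aff_app \<psi> \<circ> h | \<psi>. \<psi> \<in> Aff}"

definition d_Aff :: "(real^'n \<Rightarrow> real) \<Rightarrow> ('s \<Rightarrow> 'v::real_vector) \<Rightarrow> ('s \<Rightarrow> 'v) \<Rightarrow> ereal" where
  "d_Aff nW h g = hausdorff (d_inf nW) (Aff_of h) (Aff_of g)"

definition d_V :: "(real^'n \<Rightarrow> real) \<Rightarrow> real \<Rightarrow> ('s \<Rightarrow> 'v::real_vector) \<Rightarrow> ('s \<Rightarrow> 'v) \<Rightarrow> ereal" where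
  "d_V nW lam h g = hausdorff (d_inf nW) (V_of lam h) (V_of lam g)"

definition aff_gap :: "('v::real_vector \<Rightarrow> real) \<Rightarrow> ('s \<Rightarrow> 'v) \<Rightarrow> ('s \<Rightarrow> 'v) \<Rightarrow> ereal" where
  "aff_gap nV h g = (INF \<phi>\<in>Aff_inv. sup_norm nV (\<lambda>y. h y - aff_app \<phi> (g y)))"

end

theory Submission
  imports Defs
begin

text \<open>All norms on a finite-dimensional space are equivalent, so the componentwise estimate
  \<open>|softmax\<^sub>\<lambda>(x)\<^sub>i - softmax\<^sub>\<lambda>(y)\<^sub>i| \<le> 4\<lambda> max\<^sub>j |x\<^sub>j - y\<^sub>j|\<close> makes \<open>softmax\<^sub>\<lambda>\<close> Lipschitz for \<open>|\<cdot>|\<^sub>W\<close>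
  with some constant \<open>c(\<lambda>)\<close>. For \<open>\<phi> \<in> Aff(V)\<close> the map \<open>\<psi> \<circ> \<phi>\<close> is again affine and
  \<open>|\<psi>(h y) - \<psi>(\<phi>(g y))|\<^sub>W \<le> \<parallel>\<psi>\<^sub>l\<^sub>i\<^sub>n\<parallel> |h y - \<phi>(g y)|\<^sub>V\<close>, so \<open>softmax\<^sub>\<lambda> \<circ> \<psi> \<circ> \<phi> \<circ> g\<close> witnesses (1).
  Post-composition with a \<open>c\<close>-Lipschitz map multiplies directed Hausdorff distances between sets
  of maps by at most \<open>c\<close>, which gives (2). Part (3) is (1) with the identity in place of
  \<open>softmax\<^sub>\<lambda>\<close>, followed by (2).\<close>

lemma is_norm_sum_le:
  assumes "is_norm n" "finite S"
  shows "n (sum f S) \<le> (\<Sum>i\<in>S. n (f i))"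
  using assms(2)
proof (induction S rule: finite_induct)
  case empty
  have "n 0 = 0" using assms(1) unfolding is_norm_def by blast
  then show ?case by simp
next
  case (insert x F)
  have "n (f x + sum f F) \<le> n (f x) + n (sum f F)"
    using assms(1) by (simp add: is_norm_def)
  then show ?case using insert by simp
qed

lemma is_norm_le_norm:
  fixes n :: "'a::euclidean_space \<Rightarrow> real"
  assumes "is_norm n"
  obtains B where "B > 0" "\<And>x. n x \<le> B * norm x"
proof
  have nonneg: "\<And>x. 0 \<le> n x" and scale: "\<And>a x. n (a *\<^sub>R x) = \<bar>a\<bar> * n x"
    using assms by (simp_all add: is_norm_def)
  define B where "B = (\<Sum>b\<in>Basis. n b) + 1"
  show "B > 0" unfolding B_def using nonneg by (simp add: add_nonneg_pos sum_nonneg)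
  fix x :: 'a
  have "n x = n (\<Sum>b\<in>Basis. (x \<bullet> b) *\<^sub>R b)" by (simp add: euclidean_representation)
  also have "\<dots> \<le> (\<Sum>b\<in>Basis. n ((x \<bullet> b) *\<^sub>R b))" by (simp add: is_norm_sum_le[OF assms])
  also have "\<dots> = (\<Sum>b\<in>Basis. \<bar>x \<bullet> b\<bar> * n b)" by (simp add: scale)
  also have "\<dots> \<le> (\<Sum>b\<in>Basis. norm x * n b)"
    by (rule sum_mono) (simp add: mult_right_mono nonneg Basis_le_norm)
  also have "\<dots> \<le> B * norm x" unfolding B_def by (simp add: sum_distrib_left algebra_simps)
  finally show "n x \<le> B * norm x" .
qed

lemma norm_le_is_norm:
  fixes n :: "'a::euclidean_space \<Rightarrow> real"
  assumes "is_norm n"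
  obtains a where "a > 0" "\<And>x. a * norm x \<le> n x"
proof -
  have nonneg: "\<And>x. 0 \<le> n x" and zero: "\<And>x. n x = 0 \<longleftrightarrow> x = 0"
    and scale: "\<And>a x. n (a *\<^sub>R x) = \<bar>a\<bar> * n x" and triangle: "\<And>x y. n (x + y) \<le> n x + n y"
    using assms by (simp_all add: is_norm_def)
  obtain B where B: "B > 0" "\<And>x. n x \<le> B * norm x" using is_norm_le_norm[OF assms] by blast
  have lip: "dist (n x) (n y) \<le> B * dist x y" for x y
  proof -
    have "n (y - x) = n (x - y)" using scale[of "-1" "x - y"] by simp
    then have "n x \<le> n y + n (x - y)" "n y \<le> n x + n (x - y)"
      using triangle[of y "x - y"] triangle[of x "y - x"] by simp_all
    then have "\<bar>n x - n y\<bar> \<le> n (x - y)" by linarith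
    also have "\<dots> \<le> B * norm (x - y)" by (rule B(2))
    finally show ?thesis by (simp add: dist_real_def dist_norm)
  qed
  have "B-lipschitz_on (sphere 0 1) n"
    by (intro lipschitz_onI lip) (use B(1) in linarith)
  moreover have "sphere (0::'a) 1 \<noteq> {}" by simp
  ultimately obtain u where u: "u \<in> sphere 0 1" "\<And>y. y \<in> sphere 0 1 \<Longrightarrow> n u \<le> n y"
    using continuous_attains_inf[OF compact_sphere _ lipschitz_on_continuous_on] by blast
  show thesis
  proof
    show "n u > 0" using u(1) zero[of u] nonneg[of u] by auto
    fix x :: 'a
    show "n u * norm x \<le> n x"
    proof (cases "x = 0")
      case False
      have "n u \<le> n ((1 / norm x) *\<^sub>R x)" using u(2) False by simp
      then show ?thesis using False by (simp add: scale field_simps)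
    qed (simp add: nonneg)
  qed
qed

lemma lipschitz_is_normE:
  fixes nV :: "'v::euclidean_space \<Rightarrow> real" and nW :: "'w::euclidean_space \<Rightarrow> real"
  assumes "is_norm nV" "is_norm nW" "K > 0" "\<And>x y. norm (F x - F y) \<le> K * norm (x - y)"
  obtains c where "c > 0" "\<And>x y. nW (F x - F y) \<le> c * nV (x - y)"
proof -
  obtain B where B: "B > 0" "\<And>x. nW x \<le> B * norm x" using is_norm_le_norm[OF assms(2)] by blast
  obtain a where a: "a > 0" "\<And>x. a * norm x \<le> nV x" using norm_le_is_norm[OF assms(1)] by blast
  have "nW (F x - F y) \<le> B * K / a * nV (x - y)" for x y
  proof -
    have "nW (F x - F y) \<le> B * norm (F x - F y)" by (rule B(2))
    also have "\<dots> \<le> B * (K * norm (x - y))" using B(1) assms(4) by (simp add: mult_left_mono)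
    also have "\<dots> \<le> B * (K * (nV (x - y) / a))"
      using a(2)[of "x - y"] a(1) B(1) assms(3) by (simp add: field_simps)
    finally show ?thesis by simp
  qed
  moreover have "B * K / a > 0" using B a assms(3) by simp
  ultimately show thesis using that by blast
qed

lemma
  fixes nV :: "'v::euclidean_space \<Rightarrow> real" and nW :: "'w::euclidean_space \<Rightarrow> real"
  assumes "is_norm nV" "is_norm nW" "linear L"
  shows op_norm_nonneg: "0 \<le> op_norm nV nW L"
    and op_norm_bound: "nW (L v) \<le> op_norm nV nW L * nV v"
proof -
  have nonneg: "\<And>x. 0 \<le> nV x" and zero: "\<And>x. nV x = 0 \<longleftrightarrow> x = 0"
    and scale: "\<And>a x. nV (a *\<^sub>R x) = \<bar>a\<bar> * nV x"
    using assms(1) by (simp_all add: is_norm_def)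
  have scaleW: "\<And>a x. nW (a *\<^sub>R x) = \<bar>a\<bar> * nW x" and zeroW: "nW 0 = 0"
    using assms(2) by (simp_all add: is_norm_def)
  obtain K where K: "K > 0" "\<And>x. norm (L x) \<le> K * norm x"
    using linear_bounded_pos[OF assms(3)] by blast
  have "norm (L x - L y) \<le> K * norm (x - y)" for x y
    using K(2)[of "x - y"] by (simp add: linear_diff[OF assms(3)])
  then obtain c where c: "c > 0" "\<And>x y. nW (L x - L y) \<le> c * nV (x - y)"
    using lipschitz_is_normE[OF assms(1,2) K(1)] by blast
  define S where "S = {nW (L v) | v. nV v \<le> 1}"
  have bdd: "bdd_above S"
  proof (rule bdd_aboveI)
    fix s assume "s \<in> S"
    then obtain v where v: "s = nW (L v)" "nV v \<le> 1" by (auto simp: S_def)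
    then have "s \<le> c * nV v" using c(2)[of v 0] linear_0[OF assms(3)] by simp
    also have "\<dots> \<le> c" using v(2) c(1) by (simp add: mult_left_le)
    finally show "s \<le> c" .
  qed
  have unit: "nW (L v) \<le> op_norm nV nW L" if "nV v \<le> 1" for v
    unfolding op_norm_def S_def[symmetric] using that by (intro cSup_upper bdd) (auto simp: S_def)
  show "0 \<le> op_norm nV nW L" using unit[of 0] zero[of 0] zeroW linear_0[OF assms(3)] by simp
  show "nW (L v) \<le> op_norm nV nW L * nV v"
  proof (cases "v = 0")
    case True
    then show ?thesis using zero[of 0] zeroW linear_0[OF assms(3)] by simp
  next
    case False
    then have pos: "nV v > 0" using nonneg[of v] zero[of v] by auto
    have "nW (L ((1 / nV v) *\<^sub>R v)) \<le> op_norm nV nW L" using pos by (intro unit) (simp add: scale)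
    then show ?thesis using pos by (simp add: linear_scale[OF assms(3)] scaleW field_simps)
  qed
qed

lemma softmax_nth: "softmax lam x $ i = exp (lam * x $ i) / (\<Sum>j\<in>UNIV. exp (lam * x $ j))"
  by (simp add: softmax_def)

lemma softmax_nth_nonneg: "0 \<le> softmax lam x $ i"
  by (simp add: softmax_nth sum_nonneg)

lemma softmax_nth_le_1: "softmax lam x $ i \<le> 1"
proof -
  have "exp (lam * x $ i) \<le> (\<Sum>j\<in>UNIV. exp (lam * x $ j))"
    by (rule member_le_sum) auto
  then show ?thesis by (simp add: softmax_nth sum_pos)
qed

lemma softmax_nth_le_exp:
  fixes x y :: "real^'n"
  assumes "lam \<ge> 0" and close: "\<And>j. \<bar>x $ j - y $ j\<bar> \<le> \<delta>"
  shows "softmax lam x $ i \<le> exp (2 * lam * \<delta>) * softmax lam y $ i"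
proof -
  have exp_le: "exp (lam * u $ j) \<le> exp (lam * \<delta>) * exp (lam * v $ j)"
    if "\<bar>u $ j - v $ j\<bar> \<le> \<delta>" for u v :: "real^'n" and j
  proof -
    have "lam * (u $ j - v $ j) \<le> lam * \<delta>"
      using that assms(1) by (intro mult_left_mono) auto
    then show ?thesis by (simp add: exp_add[symmetric] algebra_simps)
  qed
  define Sx where "Sx = (\<Sum>j\<in>UNIV. exp (lam * x $ j))"
  define Sy where "Sy = (\<Sum>j\<in>UNIV. exp (lam * y $ j))"
  have "Sy \<le> exp (lam * \<delta>) * Sx"
    unfolding Sx_def Sy_def sum_distrib_left
    using exp_le close by (intro sum_mono) (simp add: abs_minus_commute)
  then have inv_le: "1 / Sx \<le> exp (lam * \<delta>) / Sy"
    by (simp add: Sx_def Sy_def sum_pos field_simps)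
  have "softmax lam x $ i = exp (lam * x $ i) * (1 / Sx)" by (simp add: softmax_nth Sx_def)
  also have "\<dots> \<le> (exp (lam * \<delta>) * exp (lam * y $ i)) * (exp (lam * \<delta>) / Sy)"
    using exp_le[OF close] inv_le by (rule mult_mono) (simp_all add: Sx_def sum_nonneg)
  also have "\<dots> = exp (2 * lam * \<delta>) * softmax lam y $ i"
    by (simp add: softmax_nth Sy_def mult_exp_exp)
  finally show ?thesis .
qed

lemma softmax_nth_diff_le:
  fixes x y :: "real^'n"
  assumes "lam \<ge> 0" "\<And>j. \<bar>x $ j - y $ j\<bar> \<le> \<delta>"
  shows "softmax lam x $ i - softmax lam y $ i \<le> 4 * lam * \<delta>"
proof -
  define t where "t = 2 * lam * \<delta>"
  have "t \<ge> 0" using assms(1) assms(2)[of i] by (simp add: t_def)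
  have "softmax lam x $ i - softmax lam y $ i \<le> (exp t - 1) * softmax lam y $ i"
    using softmax_nth_le_exp[OF assms, of i] by (simp add: t_def algebra_simps)
  also have "\<dots> \<le> exp t - 1"
    using \<open>t \<ge> 0\<close> by (intro mult_left_le softmax_nth_le_1) simp
  finally have le_exp: "softmax lam x $ i - softmax lam y $ i \<le> exp t - 1" .
  have le_1: "softmax lam x $ i - softmax lam y $ i \<le> 1"
    using softmax_nth_le_1[of lam x i] softmax_nth_nonneg[of lam y i] by linarith
  show ?thesis
  proof (cases "t \<le> 1/2")
    case True
    then have "exp t \<le> 1 + 2 * t" using real_exp_bound_lemma \<open>t \<ge> 0\<close> by blast
    then show ?thesis using le_exp by (simp add: t_def)
  next
    case False
    then show ?thesis using le_1 by (simp add: t_def)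
  qed
qed

lemma softmax_lipschitz:
  fixes x y :: "real^'n"
  assumes "lam \<ge> 0"
  shows "norm (softmax lam x - softmax lam y) \<le> 4 * lam * CARD('n) * norm (x - y)"
proof -
  have xy: "\<And>j. \<bar>x $ j - y $ j\<bar> \<le> norm (x - y)"
    by (metis component_le_norm_cart vector_minus_component)
  then have yx: "\<And>j. \<bar>y $ j - x $ j\<bar> \<le> norm (x - y)"
    by (simp add: abs_minus_commute)
  have comp: "\<bar>(softmax lam x - softmax lam y) $ i\<bar> \<le> 4 * lam * norm (x - y)" for i
    using softmax_nth_diff_le[OF assms xy, of i] softmax_nth_diff_le[OF assms yx, of i] by simp
  have "norm (softmax lam x - softmax lam y) \<le> (\<Sum>i\<in>UNIV. \<bar>(softmax lam x - softmax lam y) $ i\<bar>)"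
    by (rule norm_le_l1_cart)
  also have "\<dots> \<le> (\<Sum>i\<in>(UNIV::'n set). 4 * lam * norm (x - y))"
    by (rule sum_mono) (rule comp)
  finally show ?thesis by (simp add: mult_ac)
qed

lemma INF_ereal_mult_left:
  fixes f :: "'a \<Rightarrow> ereal"
  assumes "I \<noteq> {}" "0 \<le> c"
  shows "ereal c * (INF i\<in>I. f i) = (INF i\<in>I. ereal c * f i)"
  by (subst continuous_at_Inf_mono[where f="\<lambda>x. ereal c * x"])
     (auto simp: mono_def continuous_at continuous_at_imp_continuous_at_within assms image_comp
           intro!: ereal_mult_left_mono tendsto_cmult_ereal)

lemma d_inf_nonneg: "is_norm n \<Longrightarrow> 0 \<le> d_inf n f f'"
  unfolding d_inf_def is_norm_def by (rule order_trans[OF _ SUP_upper[OF UNIV_I]]) auto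

lemma d_inf_comp_le:
  assumes "0 \<le> k" "\<And>x y. nT (F x - F y) \<le> k * nV (x - y)"
  shows "d_inf nT (F \<circ> f) (F \<circ> f') \<le> ereal k * d_inf nV f f'"
  unfolding d_inf_def
proof (rule SUP_least)
  fix y
  have "ereal (nT ((F \<circ> f) y - (F \<circ> f') y)) \<le> ereal k * ereal (nV (f y - f' y))"
    using assms(2) by simp
  also have "\<dots> \<le> ereal k * (SUP y. ereal (nV (f y - f' y)))"
    using assms(1) by (intro ereal_mult_left_mono SUP_upper) auto
  finally show "ereal (nT ((F \<circ> f) y - (F \<circ> f') y)) \<le> ereal k * (SUP y. ereal (nV (f y - f' y)))" .
qed

lemma hausdorff_nonneg: "is_norm n \<Longrightarrow> E \<noteq> {} \<Longrightarrow> 0 \<le> hausdorff (d_inf n) E E'"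
  unfolding hausdorff_def set_dist_def
  by (metis INF_greatest SUP_upper all_not_in_conv d_inf_nonneg order_trans)

lemma set_dist_image_le:
  assumes "0 \<le> k" "\<And>x y. nT (F x - F y) \<le> k * nW (x - y)" "E \<noteq> {}"
  shows "set_dist (d_inf nT) (F \<circ> f) ((\<circ>) F ` E) \<le> ereal k * set_dist (d_inf nW) f E"
  unfolding set_dist_def image_image INF_ereal_mult_left[OF assms(3,1)]
  by (intro INF_mono' d_inf_comp_le assms(1,2))

lemma hausdorff_image_le:
  assumes "0 \<le> k" "\<And>x y. nT (F x - F y) \<le> k * nW (x - y)" "E' \<noteq> {}"
  shows "hausdorff (d_inf nT) ((\<circ>) F ` E) ((\<circ>) F ` E') \<le> ereal k * hausdorff (d_inf nW) E E'"
  unfolding hausdorff_def image_image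
proof (rule SUP_least)
  fix f assume "f \<in> E"
  have "set_dist (d_inf nT) (F \<circ> f) ((\<circ>) F ` E') \<le> ereal k * set_dist (d_inf nW) f E'"
    by (rule set_dist_image_le[OF assms(1) _ assms(3)]) (rule assms(2))
  also have "\<dots> \<le> ereal k * (SUP f\<in>E. set_dist (d_inf nW) f E')"
    using assms(1) \<open>f \<in> E\<close> by (intro ereal_mult_left_mono SUP_upper) auto
  finally show "set_dist (d_inf nT) (F \<circ> f) ((\<circ>) F ` E') \<le> ereal k * (SUP f\<in>E. set_dist (d_inf nW) f E')" .
qed

lemma aff_app_lipschitz:
  fixes nV :: "'v::euclidean_space \<Rightarrow> real" and nW :: "'w::euclidean_space \<Rightarrow> real"
  assumes "is_norm nV" "is_norm nW" "linear L"
  shows "nW (aff_app (L, b) x - aff_app (L, b) y) \<le> op_norm nV nW L * nV (x - y)"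
  using op_norm_bound[OF assms, of "x - y"] by (simp add: aff_app_def linear_diff[OF assms(3)])

lemma aff_app_comp_in_Aff_of:
  assumes "(L, b) \<in> Aff" "linear A"
  shows "aff_app (L, b) \<circ> (aff_app (A, a) \<circ> g) \<in> Aff_of g"
proof -
  have "linear L" using assms(1) by (simp add: Aff_def)
  then have "aff_app (L, b) \<circ> (aff_app (A, a) \<circ> g) = aff_app (L \<circ> A, L a + b) \<circ> g"
    by (auto simp: aff_app_def linear_add algebra_simps)
  moreover have "(L \<circ> A, L a + b) \<in> Aff" using linear_compose[OF assms(2) \<open>linear L\<close>] by (simp add: Aff_def)
  ultimately show ?thesis unfolding Aff_of_def by blast
qed

lemma Aff_of_nonempty: "Aff_of h \<noteq> {}"
proof -
  have "aff_app (\<lambda>_. 0, 0) \<circ> h \<in> Aff_of h"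
    unfolding Aff_of_def Aff_def by (auto simp: module_hom_zero)
  then show ?thesis by blast
qed

lemma V_of_eq_image: "V_of lam h = (\<circ>) (softmax lam) ` Aff_of h"
  by (auto simp: V_of_def Aff_of_def comp_assoc)

lemma set_dist_le_aff_gap:
  fixes nV :: "'v::euclidean_space \<Rightarrow> real" and nW :: "'w::euclidean_space \<Rightarrow> real"
    and F :: "'w \<Rightarrow> 'u::real_vector" and h g :: "'s \<Rightarrow> 'v"
  assumes "is_norm nV" "is_norm nW" "0 \<le> C" "\<And>x y. nT (F x - F y) \<le> C * nW (x - y)"
    and "\<psi> \<in> Aff"
  shows "set_dist (d_inf nT) (F \<circ> aff_app \<psi> \<circ> h) ((\<circ>) F ` Aff_of g)
    \<le> ereal (C * op_norm nV nW (fst \<psi>)) * aff_gap nV h g"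
proof -
  obtain L b where \<psi>: "\<psi> = (L, b)" and L: "linear L" using assms(5) by (auto simp: Aff_def)
  define k where "k = C * op_norm nV nW L"
  have "0 \<le> k" unfolding k_def using assms(3) op_norm_nonneg[OF assms(1,2) L] by simp
  have lip: "nT ((F \<circ> aff_app \<psi>) x - (F \<circ> aff_app \<psi>) y) \<le> k * nV (x - y)" for x y
  proof -
    have "nT ((F \<circ> aff_app \<psi>) x - (F \<circ> aff_app \<psi>) y) \<le> C * nW (aff_app \<psi> x - aff_app \<psi> y)"
      by (simp add: assms(4))
    also have "\<dots> \<le> k * nV (x - y)"
      unfolding k_def \<psi> using aff_app_lipschitz[OF assms(1,2) L] assms(3)
      by (simp add: mult.assoc mult_left_mono)
    finally show ?thesis .
  qed
  have "(id, 0) \<in> (Aff_inv :: (('v \<Rightarrow> 'v) \<times> 'v) set)" by (simp add: Aff_inv_def linear_id)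
  then have Aff_inv_ne: "Aff_inv \<noteq> ({} :: (('v \<Rightarrow> 'v) \<times> 'v) set)" by blast
  show ?thesis
    unfolding aff_gap_def \<psi> fst_conv k_def[symmetric] INF_ereal_mult_left[OF Aff_inv_ne \<open>0 \<le> k\<close>]
  proof (rule INF_greatest)
    fix \<phi> :: "('v \<Rightarrow> 'v) \<times> 'v" assume "\<phi> \<in> Aff_inv"
    then obtain A a where \<phi>: "\<phi> = (A, a)" "linear A" by (auto simp: Aff_inv_def)
    have "aff_app \<psi> \<circ> (aff_app \<phi> \<circ> g) \<in> Aff_of g"
      unfolding \<psi> \<phi>(1) using assms(5)[unfolded \<psi>] \<phi>(2) by (rule aff_app_comp_in_Aff_of)
    then have "F \<circ> aff_app \<psi> \<circ> (aff_app \<phi> \<circ> g) \<in> (\<circ>) F ` Aff_of g"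
      unfolding comp_assoc by (rule imageI)
    then have "set_dist (d_inf nT) (F \<circ> aff_app \<psi> \<circ> h) ((\<circ>) F ` Aff_of g)
        \<le> d_inf nT (F \<circ> aff_app \<psi> \<circ> h) (F \<circ> aff_app \<psi> \<circ> (aff_app \<phi> \<circ> g))"
      unfolding set_dist_def by (rule INF_lower)
    also have "\<dots> \<le> ereal k * d_inf nV h (aff_app \<phi> \<circ> g)"
      by (rule d_inf_comp_le[OF \<open>0 \<le> k\<close>]) (rule lip)
    finally show "set_dist (d_inf nT) (F \<circ> aff_app (L, b) \<circ> h) ((\<circ>) F ` Aff_of g)
        \<le> ereal k * sup_norm nV (\<lambda>y. h y - aff_app \<phi> (g y))"
      by (simp add: \<psi> d_inf_def sup_norm_def)
  qed
qed

lemma d_V_le_d_Aff: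
  assumes "0 \<le> c" "\<And>x y. nW (softmax lam x - softmax lam y) \<le> c * nW (x - y)"
  shows "d_V nW lam h g \<le> ereal c * d_Aff nW h g"
  unfolding d_V_def d_Aff_def V_of_eq_image
  by (rule hausdorff_image_le[OF assms(1) _ Aff_of_nonempty]) (rule assms(2))

lemma d_Aff_eq_0_if_aff_gap_eq_0:
  fixes h g :: "'s \<Rightarrow> 'v::euclidean_space" and nW :: "real^'n \<Rightarrow> real"
  assumes "is_norm nV" "is_norm nW" "aff_gap nV h g = 0"
  shows "d_Aff nW h g = 0"
proof (rule antisym)
  show "d_Aff nW h g \<le> 0"
    unfolding d_Aff_def hausdorff_def
  proof (rule SUP_least)
    fix f assume "f \<in> (Aff_of h :: ('s \<Rightarrow> real^'n) set)"
    then obtain \<psi> where "\<psi> \<in> Aff" "f = id \<circ> aff_app \<psi> \<circ> h" by (auto simp: Aff_of_def)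
    then show "set_dist (d_inf nW) f (Aff_of g) \<le> 0"
      using set_dist_le_aff_gap[OF assms(1,2), of 1 nW id \<psi> h g] assms(3) by simp
  qed
  show "0 \<le> d_Aff nW h g"
    unfolding d_Aff_def using assms(2) Aff_of_nonempty by (rule hausdorff_nonneg)
qed

theorem mainTheorem4:
  fixes nV :: "real^'d \<Rightarrow> real" and nW :: "real^'n \<Rightarrow> real" and lam :: real
  assumes "is_norm nV" and "is_norm nW" and "lam > 0"
  shows "\<exists>c>0. \<forall>(h :: 'a::finite list \<Rightarrow> real^'d) g.
      (\<forall>\<psi> \<in> (Aff :: ((real^'d \<Rightarrow> real^'n) \<times> (real^'n)) set).
         set_dist (d_inf nW) (softmax lam \<circ> aff_app \<psi> \<circ> h) (V_of lam g)
           \<le> ereal (c * op_norm nV nW (fst \<psi>)) * aff_gap nV h g)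
    \<and> d_V nW lam h g \<le> ereal c * d_Aff nW h g
    \<and> (aff_gap nV h g = 0 \<longrightarrow> d_Aff nW h g = 0)
    \<and> (d_Aff nW h g = 0 \<longrightarrow> d_V nW lam h g = 0)"
proof -
  have "4 * lam * CARD('n) > 0" using assms(3) by simp
  moreover have "norm (softmax lam x - softmax lam y) \<le> 4 * lam * CARD('n) * norm (x - y)"
    for x y :: "real^'n"
    using assms(3) by (simp add: softmax_lipschitz)
  ultimately obtain c where c: "c > 0" "\<And>x y. nW (softmax lam x - softmax lam y) \<le> c * nW (x - y)"
    using lipschitz_is_normE[OF assms(2,2)] by blast
  have d_V_le: "d_V nW lam h g \<le> ereal c * d_Aff nW h g" for h g :: "'a list \<Rightarrow> real^'d"
    using c by (intro d_V_le_d_Aff) auto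
  have d_V_nonneg: "0 \<le> d_V nW lam h g" for h g :: "'a list \<Rightarrow> real^'d"
    unfolding d_V_def V_of_eq_image by (rule hausdorff_nonneg[OF assms(2)]) (simp add: Aff_of_nonempty)
  have "d_V nW lam h g = 0" if "d_Aff nW h g = 0" for h g :: "'a list \<Rightarrow> real^'d"
    using d_V_le[of h g] d_V_nonneg[of h g] that by simp
  moreover have "set_dist (d_inf nW) (softmax lam \<circ> aff_app \<psi> \<circ> h) (V_of lam g)
      \<le> ereal (c * op_norm nV nW (fst \<psi>)) * aff_gap nV h g"
    if "\<psi> \<in> Aff" for \<psi> and h g :: "'a list \<Rightarrow> real^'d"
    unfolding V_of_eq_image using c(1) by (intro set_dist_le_aff_gap[OF assms(1,2) _ c(2) that]) simp
  ultimately show ?thesis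
    using c(1) d_V_le d_Aff_eq_0_if_aff_gap_eq_0[OF assms(1,2)] by blast
qed

end
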